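(* Let $m \geq 4$, let $D \in \mathbb{R}^{m \times 4}$ have full (column) rank, and let $b \in \mathbb{R}^m$. Let $E \in \mathbb{S}^4$ and $c \in \mathbb{R}^4$ be given by $E_{23}=E_{32}=\tfrac12$, all other entries of $E$ zero, and $c=(0,0,0,-1)^\intercal$, so that for $x=(x_1,x_2,x_3,x_4)^\intercal$ we have $r(x) := x^\intercal E x + c^\intercal x = x_2x_3 - x_4$. Consider the nonconvex problem $$\text{(NC1)}:\quad \underset{x\in\mathbb{R}^4}{\mathrm{minimize}}\ \tfrac12\|Dx-b\|_2^2 \quad \text{s.t. } r(x)=0,$$ and the convex problem $$\text{(P)}:\quad \underset{X\in\mathbb{S}^4,\ x\in\mathbb{R}^4}{\mathrm{minimize}}\ \tfrac12\operatorname{tr}(D^\intercal D X) - b^\intercal D x + \tfrac12 b^\intercal b \quad \text{s.t. } X \succeq xx^\intercal,\ \operatorname{tr}(EX)+c^\intercal x = 0.$$ Then (NC1) and (P) are equivalent (in particular, they have the same optimal value), and the optimal solution of (NC1) is attained.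
   Context: $\mathbb{S}^4$ denotes the space of real symmetric $4\times 4$ matrices, and $X \succeq xx^\intercal$ means $X - xx^\intercal$ is positive semidefinite. In the application, $x=(k_v,k_g,g_*,u)$ with $u$ a dummy variable representing $k_g g_*$, so the constraint $r(x)=0$ encodes $k_g g_* = u$. *)

theory Defs
  imports "HOL-Analysis.Analysis"
begin

text \<open>Vectors in R^4 are real^4, components indexed 1,2,3,4 (as for vector [a,b,c,d]).\<close>

definition outer :: "real^'n \<Rightarrow> real^'n^'n" where
  "outer x = (\<chi> i j. x $ i * x $ j)"

definition psd :: "real^'n^'n \<Rightarrow> bool" where
  "psd M \<longleftrightarrow> transpose M = M \<and> (\<forall>v. 0 \<le> v \<bullet> (M *v v))"

definition Emat :: "real^4^4" where
  "Emat = (\<chi> i j. if (i = 2 \<and> j = 3) \<or> (i = 3 \<and> j = 2) then 1/2 else 0)"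

definition cvec :: "real^4" where
  "cvec = vector [0, 0, 0, -1]"

definition rfun :: "real^4 \<Rightarrow> real" where
  "rfun x = x \<bullet> (Emat *v x) + cvec \<bullet> x"

definition nc1_obj :: "real^4^'m \<Rightarrow> real^'m \<Rightarrow> real^4 \<Rightarrow> real" where
  "nc1_obj D b x = (1/2) * (norm (D *v x - b))\<^sup>2"

definition nc1_feasible :: "real^4 \<Rightarrow> bool" where
  "nc1_feasible x \<longleftrightarrow> rfun x = 0"

definition p_obj :: "real^4^'m \<Rightarrow> real^'m \<Rightarrow> real^4^4 \<Rightarrow> real^4 \<Rightarrow> real" where
  "p_obj D b X x = (1/2) * trace (transpose D ** D ** X) - b \<bullet> (D *v x) + (1/2) * (b \<bullet> b)"

definition p_feasible :: "real^4^4 \<Rightarrow> real^4 \<Rightarrow> bool" where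
  "p_feasible X x \<longleftrightarrow> transpose X = X \<and> psd (X - outer x) \<and> trace (Emat ** X) + cvec \<bullet> x = 0"

definition nc1_val :: "real^4^'m \<Rightarrow> real^'m \<Rightarrow> real" where
  "nc1_val D b = Inf (nc1_obj D b ` {x. nc1_feasible x})"

definition p_val :: "real^4^'m \<Rightarrow> real^'m \<Rightarrow> real" where
  "p_val D b = Inf ((\<lambda>(X, x). p_obj D b X x) ` {(X, x). p_feasible X x})"

end

theory Submission
  imports Defs "HOL-Library.Quadratic_Discriminant"
begin

text \<open>
  Lifting \<open>x \<mapsto> (x x\<^sup>T, x)\<close> maps feasible points of (NC1) to feasible points of (P) with
  the same objective, so (P) is a relaxation. Conversely, for a feasible \<open>(X, x)\<close> put
  \<open>S = X - x x\<^sup>T \<succeq> 0\<close>. The objective of (P) is \<open>f(x) + 1/2 \<Sum>\<^sub>k d\<^sub>k\<^sup>T S d\<^sub>k\<close>, where \<open>f\<close> is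
  the objective of (NC1) and \<open>d\<^sub>k\<close> are the rows of \<open>D\<close>, and the constraint reads
  \<open>r(x) = -S\<^sub>2\<^sub>3\<close>. If \<open>S\<^sub>2\<^sub>3 \<noteq> 0\<close> then \<open>S\<^sub>2\<^sub>2 > 0\<close>, and along the line \<open>x + t S e\<^sub>2\<close> the
  constraint becomes \<open>S\<^sub>2\<^sub>3 (S\<^sub>2\<^sub>2 t\<^sup>2 + \<beta> t - 1) = 0\<close>, whose roots have opposite signs.
  At a root the objective is \<open>f(x) + \<parallel>D S e\<^sub>2\<parallel>\<^sup>2 / (2 S\<^sub>2\<^sub>2)\<close> plus a term linear in \<open>t\<close>,
  which the choice of root makes nonpositive, and the Cauchy-Schwarz inequality for the
  form \<open>S\<close> bounds the rest by \<open>1/2 \<Sum>\<^sub>k d\<^sub>k\<^sup>T S d\<^sub>k\<close>. Attainment holds because \<open>D\<close> is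
  injective, so the image of the closed feasible set is closed and has a point nearest to \<open>b\<close>.
\<close>

lemma quadratic_nonneg_imp_discrim_le:
  fixes A B C :: real
  assumes "0 \<le> C" and nonneg: "\<And>t. 0 \<le> A + 2 * B * t + C * t\<^sup>2"
  shows "B\<^sup>2 \<le> A * C"
proof (cases "C = 0")
  case True
  have "B = 0"
  proof (rule ccontr)
    assume "B \<noteq> 0"
    then show False
      using nonneg[of "- (\<bar>A\<bar> + 1) / (2 * B)"] True by simp
  qed
  then show ?thesis using True by simp
next
  case False
  then have "0 < C" using assms(1) by simp
  moreover have "0 \<le> A - B\<^sup>2 / C"
    using nonneg[of "- B / C"] False by (simp add: power2_eq_square field_simps)
  ultimately show ?thesis by (simp add: field_simps)
qed

lemma quadratic_root_with_sign:
  fixes a \<beta> g :: real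
  assumes "0 < a"
  obtains t where "a * t\<^sup>2 + \<beta> * t - 1 = 0" and "t * g \<le> 0"
proof -
  define r where "r = sqrt (discrim a \<beta> (-1))"
  define t\<^sub>1 t\<^sub>2 where "t\<^sub>1 = (- \<beta> + r) / (2 * a)" and "t\<^sub>2 = (- \<beta> - r) / (2 * a)"
  have roots: "a * t\<^sup>2 + \<beta> * t - 1 = 0" if "t = t\<^sub>1 \<or> t = t\<^sub>2" for t
    using discriminant_nonneg[of a \<beta> "-1" t] that assms
    by (simp add: r_def t\<^sub>1_def t\<^sub>2_def discrim_def)
  have "\<bar>\<beta>\<bar> < r"
    using real_sqrt_less_mono[of "\<beta>\<^sup>2" "discrim a \<beta> (-1)"] assms by (simp add: r_def discrim_def)
  then have "0 < t\<^sub>1" "t\<^sub>2 < 0"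
    using assms by (simp_all add: t\<^sub>1_def t\<^sub>2_def divide_pos_pos divide_neg_pos)
  show ?thesis
  proof (cases "g \<le> 0")
    case True
    then show ?thesis using that[of t\<^sub>1] roots \<open>0 < t\<^sub>1\<close> by (simp add: mult_nonneg_nonpos)
  next
    case False
    then show ?thesis using that[of t\<^sub>2] roots \<open>t\<^sub>2 < 0\<close> by (simp add: mult_nonpos_nonneg)
  qed
qed

lemma psd_symmetric_form: "psd S \<Longrightarrow> u \<bullet> (S *v w) = w \<bullet> (S *v u)"
  by (metis dot_lmul_matrix inner_commute psd_def transpose_transpose vector_transpose_matrix)

lemma psd_Cauchy_Schwarz:
  assumes "psd S"
  shows "(w \<bullet> (S *v u))\<^sup>2 \<le> (w \<bullet> (S *v w)) * (u \<bullet> (S *v u))"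
proof (rule quadratic_nonneg_imp_discrim_le)
  show "0 \<le> u \<bullet> (S *v u)" using assms by (simp add: psd_def)
  fix t :: real
  have "0 \<le> (w + t *\<^sub>R u) \<bullet> (S *v (w + t *\<^sub>R u))" using assms by (simp add: psd_def)
  also have "\<dots> = w \<bullet> (S *v w) + 2 * (w \<bullet> (S *v u)) * t + (u \<bullet> (S *v u)) * t\<^sup>2"
    using psd_symmetric_form[OF assms, of u w]
    by (simp add: matrix_vector_right_distrib matrix_vector_mult_scaleR inner_add_left
        inner_add_right algebra_simps power2_eq_square)
  finally show "0 \<le> w \<bullet> (S *v w) + 2 * (w \<bullet> (S *v u)) * t + (u \<bullet> (S *v u)) * t\<^sup>2" .
qed

lemma psd_diag_pos:
  assumes "psd S" "S$i$j \<noteq> 0"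
  shows "0 < S$j$j"
proof -
  have entry: "axis k 1 \<bullet> (S *v axis l 1) = S$k$l" for k l
    by (simp add: inner_axis' matrix_vector_mult_basis column_def)
  have "(S$i$j)\<^sup>2 \<le> S$i$i * S$j$j"
    using psd_Cauchy_Schwarz[OF assms(1), of "axis i 1" "axis j 1"] by (simp add: entry)
  moreover have "0 \<le> S$j$j"
    using assms(1) entry[of j j] unfolding psd_def by metis
  ultimately show ?thesis using assms(2) by (cases "S$j$j = 0") auto
qed

lemma inner_outer_mult: "d \<bullet> (outer x *v d) = (d \<bullet> x)\<^sup>2"
  by (simp add: outer_def inner_vec_def matrix_vector_mult_def power2_eq_square sum_product
      sum_distrib_left mult_ac)

lemma trace_transpose_mult_mult:
  fixes D :: "real^'n^'m"
  shows "trace (transpose D ** D ** Y) = (\<Sum>k\<in>UNIV. D$k \<bullet> (Y *v D$k))"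
proof -
  have "trace (transpose D ** D ** Y) = (\<Sum>i\<in>UNIV. \<Sum>j\<in>UNIV. \<Sum>k\<in>UNIV. D$k$i * D$k$j * Y$j$i)"
    by (simp add: trace_def matrix_matrix_mult_def transpose_def sum_distrib_right)
  also have "\<dots> = (\<Sum>k\<in>UNIV. \<Sum>j\<in>UNIV. \<Sum>i\<in>UNIV. D$k$i * D$k$j * Y$j$i)"
    by (subst sum.swap, subst (2) sum.swap, subst sum.swap) (rule refl)
  also have "\<dots> = (\<Sum>k\<in>UNIV. D$k \<bullet> (Y *v D$k))"
    by (simp add: inner_vec_def matrix_vector_mult_def sum_distrib_left mult_ac)
  finally show ?thesis .
qed

lemma power2_norm_matrix_vector_mult:
  fixes D :: "real^'n^'m"
  shows "(norm (D *v x))\<^sup>2 = (\<Sum>k\<in>UNIV. (D$k \<bullet> x)\<^sup>2)"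
  unfolding power2_norm_eq_inner inner_vec_def[of "D *v x"]
  by (simp add: matrix_vector_mul_component power2_eq_square)

lemma norm_mult_psd_le:
  fixes D :: "real^'n^'m"
  assumes "psd S"
  shows "(norm (D *v (S *v u)))\<^sup>2 \<le> (u \<bullet> (S *v u)) * (\<Sum>k\<in>UNIV. D$k \<bullet> (S *v D$k))"
proof -
  have "(norm (D *v (S *v u)))\<^sup>2 = (\<Sum>k\<in>UNIV. (D$k \<bullet> (S *v u))\<^sup>2)"
    by (rule power2_norm_matrix_vector_mult)
  also have "\<dots> \<le> (\<Sum>k\<in>UNIV. (u \<bullet> (S *v u)) * (D$k \<bullet> (S *v D$k)))"
    by (intro sum_mono) (metis psd_Cauchy_Schwarz[OF assms] mult.commute)
  finally show ?thesis by (simp add: sum_distrib_left)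
qed

lemma least_squares_attains_min:
  fixes D :: "real^'n^'m"
  assumes "inj ((*v) D)" and "closed F" and "F \<noteq> {}"
  obtains x where "x \<in> F" and "\<And>y. y \<in> F \<Longrightarrow> norm (D *v x - b) \<le> norm (D *v y - b)"
proof -
  have "closed ((*v) D ` F)"
    using closed_injective_linear_image[OF assms(2) _ assms(1)] by simp
  then obtain z where "z \<in> (*v) D ` F"
    and min: "\<And>w. w \<in> (*v) D ` F \<Longrightarrow> dist b z \<le> dist b w"
    using distance_attains_inf[of "(*v) D ` F" b] assms(3) by blast
  then obtain x where "x \<in> F" and "z = D *v x" by blast
  show ?thesis
  proof (rule that)
    show "x \<in> F" by fact
    fix y assume "y \<in> F"
    then have "dist b z \<le> dist b (D *v y)" using min by blast
    then show "norm (D *v x - b) \<le> norm (D *v y - b)"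
      using \<open>z = D *v x\<close> by (simp add: dist_norm norm_minus_commute)
  qed
qed

lemma rfun_eq: "rfun x = x$2 * x$3 - x$4"
  by (simp add: rfun_def Emat_def cvec_def vector_def inner_vec_def sum_4
      matrix_vector_mult_def algebra_simps)

lemma trace_Emat_mult: "trace (Emat ** X) = (X$2$3 + X$3$2) / 2"
  by (simp add: trace_def Emat_def sum_4 matrix_matrix_mult_def)

lemma cvec_inner: "cvec \<bullet> x = - x$4"
  by (simp add: cvec_def vector_def inner_vec_def sum_4)

lemma transpose_outer: "transpose (outer x) = outer x"
  by (simp add: vec_eq_iff transpose_def outer_def mult.commute)

lemma rfun_add_scaleR:
  "rfun (x + t *\<^sub>R v) = rfun x + t * (x$2 * v$3 + x$3 * v$2 - v$4) + t\<^sup>2 * (v$2 * v$3)"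
  by (simp add: rfun_eq algebra_simps power2_eq_square)

lemma nc1_obj_add_scaleR:
  "nc1_obj D b (x + t *\<^sub>R v)
    = nc1_obj D b x + t * ((D *v x - b) \<bullet> (D *v v)) + t\<^sup>2 / 2 * (norm (D *v v))\<^sup>2"
proof -
  have "D *v (x + t *\<^sub>R v) - b = (D *v x - b) + t *\<^sub>R (D *v v)"
    by (simp add: matrix_vector_right_distrib matrix_vector_mult_scaleR)
  then show ?thesis
    unfolding nc1_obj_def power2_norm_eq_inner
    by (simp add: inner_add_left inner_add_right inner_commute algebra_simps power2_eq_square)
qed

lemma p_obj_eq:
  fixes D :: "real^4^'m"
  shows "p_obj D b X x = nc1_obj D b x + (\<Sum>k\<in>UNIV. D$k \<bullet> ((X - outer x) *v D$k)) / 2"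
proof -
  have "trace (transpose D ** D ** X)
      = (\<Sum>k\<in>UNIV. D$k \<bullet> ((X - outer x) *v D$k)) + (norm (D *v x))\<^sup>2"
    by (simp add: trace_transpose_mult_mult power2_norm_matrix_vector_mult
        matrix_vector_mult_diff_rdistrib inner_diff_right inner_outer_mult flip: sum.distrib)
  moreover have "(norm (D *v x - b))\<^sup>2 = (norm (D *v x))\<^sup>2 - 2 * (b \<bullet> (D *v x)) + b \<bullet> b"
    by (simp add: power2_norm_eq_inner inner_diff_left inner_diff_right inner_commute)
  ultimately show ?thesis by (simp add: p_obj_def nc1_obj_def field_simps)
qed

lemma p_constraint_eq:
  assumes "transpose X = X"
  shows "trace (Emat ** X) + cvec \<bullet> x = rfun x + (X - outer x)$2$3"
proof -
  have "X$3$2 = X$2$3" using arg_cong[OF assms, of "\<lambda>M. M$2$3"] by (simp add: transpose_def)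
  then show ?thesis by (simp add: trace_Emat_mult cvec_inner rfun_eq outer_def)
qed

lemma p_feasible_outer:
  assumes "nc1_feasible x"
  shows "p_feasible (outer x) x"
proof -
  have "psd (outer x - outer x)" by (simp add: psd_def transpose_def vec_eq_iff)
  then show ?thesis
    using assms by (simp add: p_feasible_def nc1_feasible_def transpose_outer p_constraint_eq)
qed

lemma p_obj_outer: "p_obj D b (outer x) x = nc1_obj D b x"
  by (simp add: p_obj_eq)

lemma nc1_feasible_le_psd_correction:
  fixes D :: "real^4^'m"
  assumes psd: "psd S" and constraint: "rfun x + S$2$3 = 0"
  shows "\<exists>y. nc1_feasible y
    \<and> nc1_obj D b y \<le> nc1_obj D b x + (\<Sum>k\<in>UNIV. D$k \<bullet> (S *v D$k)) / 2"
    (is "\<exists>y. _ \<and> _ \<le> _ + ?T / 2")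
proof (cases "S$2$3 = 0")
  case True
  moreover have "0 \<le> ?T" using psd by (simp add: psd_def sum_nonneg)
  ultimately show ?thesis using constraint by (auto simp: nc1_feasible_def)
next
  case False
  define s a where "s = S$2$3" and "a = S$2$2"
  define v where "v = S *v axis 2 1"
  have "S$3$2 = s" using psd_symmetric_form[OF psd, of "axis 3 1" "axis 2 1"]
    by (simp add: s_def inner_axis' matrix_vector_mult_basis column_def)
  then have "0 < a" and v: "v$2 = a" "v$3 = s"
    using psd_diag_pos[OF psd, of 3 2] False
    by (simp_all add: a_def s_def v_def matrix_vector_mult_basis column_def)
  define \<beta> G Q where "\<beta> = (x$2 * s + x$3 * a - v$4) / s"
    and "G = (D *v x - b) \<bullet> (D *v v)" and "Q = (norm (D *v v))\<^sup>2"
  obtain t where root: "a * t\<^sup>2 + \<beta> * t - 1 = 0" and sign: "t * (G - Q * \<beta> / (2 * a)) \<le> 0"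
    using quadratic_root_with_sign[OF \<open>0 < a\<close>] .
  have "rfun (x + t *\<^sub>R v) = s * (a * t\<^sup>2 + \<beta> * t - 1)"
  proof -
    have "rfun x = - s" "s \<noteq> 0" using constraint False by (simp_all add: s_def add_eq_0_iff)
    then show ?thesis by (simp add: rfun_add_scaleR v \<beta>_def field_simps)
  qed
  then have "nc1_feasible (x + t *\<^sub>R v)" by (simp add: nc1_feasible_def root)
  moreover have "Q \<le> a * ?T"
    using norm_mult_psd_le[OF psd, of D "axis 2 1"]
    by (simp add: Q_def v_def a_def inner_axis' matrix_vector_mult_basis column_def)
  then have "nc1_obj D b (x + t *\<^sub>R v) \<le> nc1_obj D b x + ?T / 2"
  proof -
    have quad: "t\<^sup>2 / 2 * Q = Q / (2 * a) - t * (Q * \<beta> / (2 * a))"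
      using root \<open>0 < a\<close> by (simp add: field_simps) algebra
    have "nc1_obj D b (x + t *\<^sub>R v) = nc1_obj D b x + Q / (2 * a) + t * (G - Q * \<beta> / (2 * a))"
      unfolding nc1_obj_add_scaleR G_def [symmetric] Q_def [symmetric] quad
      by (simp add: algebra_simps)
    also have "\<dots> \<le> nc1_obj D b x + Q / (2 * a)" using sign by simp
    also have "\<dots> \<le> nc1_obj D b x + ?T / 2"
      using \<open>Q \<le> a * ?T\<close> \<open>0 < a\<close> by (simp add: field_simps)
    finally show ?thesis .
  qed
  ultimately show ?thesis by blast
qed

lemma p_feasible_imp_nc1_le:
  fixes D :: "real^4^'m"
  assumes "p_feasible X x"
  obtains y where "nc1_feasible y" and "nc1_obj D b y \<le> p_obj D b X x"
proof -
  have sym: "transpose X = X" and psd: "psd (X - outer x)"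
    and "trace (Emat ** X) + cvec \<bullet> x = 0"
    using assms by (simp_all add: p_feasible_def)
  then have "rfun x + (X - outer x)$2$3 = 0"
    using p_constraint_eq[OF sym, of x] by linarith
  then obtain y where "nc1_feasible y"
    and "nc1_obj D b y \<le> nc1_obj D b x + (\<Sum>k\<in>UNIV. D$k \<bullet> ((X - outer x) *v D$k)) / 2"
    using nc1_feasible_le_psd_correction[OF psd] by blast
  then show ?thesis using that by (simp add: p_obj_eq)
qed

lemma nc1_attains_min:
  fixes D :: "real^4^'m"
  assumes "rank D = 4"
  obtains x where "nc1_feasible x" and "\<And>y. nc1_feasible y \<Longrightarrow> nc1_obj D b x \<le> nc1_obj D b y"
proof -
  have "inj ((*v) D)" using assms full_rank_injective[of D] by simp
  moreover have "closed {x. nc1_feasible x}"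
    unfolding nc1_feasible_def rfun_eq by (intro closed_Collect_eq continuous_intros)
  moreover have "nc1_feasible 0" by (simp add: nc1_feasible_def rfun_eq)
  ultimately obtain x where "nc1_feasible x"
    and min: "\<And>y. nc1_feasible y \<Longrightarrow> norm (D *v x - b) \<le> norm (D *v y - b)"
    using least_squares_attains_min[of D "{x. nc1_feasible x}" b] by auto
  show ?thesis
  proof (rule that)
    show "nc1_feasible x" by fact
    fix y assume "nc1_feasible y"
    then show "nc1_obj D b x \<le> nc1_obj D b y"
      using min by (simp add: nc1_obj_def power_mono)
  qed
qed

theorem lemma1:
  fixes D :: "real^4^'m" and b :: "real^'m"
  assumes "CARD('m) \<ge> 4"
    and "rank D = 4"
  shows "nc1_val D b = p_val D b
    \<and> (\<exists>x. nc1_feasible x \<and> nc1_obj D b x = nc1_val D b)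
    \<and> (\<forall>x. nc1_feasible x \<and> nc1_obj D b x = nc1_val D b
           \<longrightarrow> p_feasible (outer x) x \<and> p_obj D b (outer x) x = p_val D b)"
proof -
  obtain x\<^sub>0 where feasible: "nc1_feasible x\<^sub>0"
    and min: "\<And>y. nc1_feasible y \<Longrightarrow> nc1_obj D b x\<^sub>0 \<le> nc1_obj D b y"
    using nc1_attains_min[OF assms(2), where b = b] by blast
  have nc1_val: "nc1_val D b = nc1_obj D b x\<^sub>0"
    unfolding nc1_val_def by (rule cInf_eq_minimum) (use feasible min in auto)
  have p_val: "p_val D b = nc1_obj D b x\<^sub>0"
    unfolding p_val_def
  proof (rule cInf_eq_minimum)
    show "nc1_obj D b x\<^sub>0 \<in> (\<lambda>(X, x). p_obj D b X x) ` {(X, x). p_feasible X x}"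
      using p_feasible_outer[OF feasible] p_obj_outer[of D b x\<^sub>0]
      by (auto intro!: image_eqI[where x = "(outer x\<^sub>0, x\<^sub>0)"])
  next
    fix z assume "z \<in> (\<lambda>(X, x). p_obj D b X x) ` {(X, x). p_feasible X x}"
    then obtain X x where "p_feasible X x" and "z = p_obj D b X x" by auto
    then obtain y where "nc1_feasible y" and "nc1_obj D b y \<le> z"
      using p_feasible_imp_nc1_le by blast
    then show "nc1_obj D b x\<^sub>0 \<le> z" using min by fastforce
  qed
  show ?thesis
    using feasible p_feasible_outer by (auto simp: nc1_val p_val p_obj_outer)
qed

end
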